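(* Let $1\le d\le n-2$ and let $H$ be a $d$-hypercut over $[n]$. Then the facet graph $G_d(H)$ is $(n-d-1)$-connected.
   Context: Fix a field $\mathbb F$. A $d$-simplex is a $(d+1)$-element subset of $[n]$ oriented by increasing order. For a simplex $\rho$ and $\tau=\rho\setminus\{p\}$ with $p$ the $i$-th smallest element of $\rho$, $\mathrm{sign}(\rho,\tau)=(-1)^{i-1}$. A $d$-cochain is a formal $\mathbb F$-combination of $d$-simplices; the coboundary is $\delta\tau=\sum_{p\in[n]\setminus\tau}\mathrm{sign}(\tau\cup\{p\},\tau)(\tau\cup\{p\})$, extended linearly. A $d$-cocycle is a $d$-cochain $Z$ with $\delta Z=0$; a $d$-hypercut is a nonzero $d$-cocycle $H$ such that every $d$-cocycle supported in $\mathrm{Supp}(H)$ is a scalar multiple of $H$. The facet graph $G_d(H)$ has vertex set $\mathrm{Supp}(H)$, two $d$-simplices adjacent iff they share a $(d-1)$-face. A graph is $k$-connected if deleting any set of fewer than $k$ of its vertices leaves a nonempty connected graph. *)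

theory Defs
  imports Main
begin

text \<open>Simplices over [n] = {1..n} are represented as finite sets of naturals,
  oriented by increasing order. Cochains are functions from sets to the field,
  supported on d-simplices.\<close>

definition simplex :: "nat \<Rightarrow> nat \<Rightarrow> nat set \<Rightarrow> bool" where
  "simplex n d \<sigma> \<longleftrightarrow> \<sigma> \<subseteq> {1..n} \<and> card \<sigma> = d + 1"

text \<open>sign(rho, rho - {p}) = (-1)^(i-1) where p is the i-th smallest element of rho;
  i - 1 is the number of elements of rho smaller than p.\<close>
definition simp_sign :: "nat set \<Rightarrow> nat \<Rightarrow> 'a::field" where
  "simp_sign \<rho> p = (-1) ^ card {q \<in> \<rho>. q < p}"

definition cochain :: "nat \<Rightarrow> nat \<Rightarrow> (nat set \<Rightarrow> 'a::field) \<Rightarrow> bool" where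
  "cochain n d Z \<longleftrightarrow> (\<forall>\<sigma>. Z \<sigma> \<noteq> 0 \<longrightarrow> simplex n d \<sigma>)"

text \<open>Coefficient of rho in the coboundary: the linear extension of
  delta tau = sum over p not in tau of sign(tau + p, tau) (tau + p).\<close>
definition coboundary :: "nat \<Rightarrow> (nat set \<Rightarrow> 'a::field) \<Rightarrow> nat set \<Rightarrow> 'a" where
  "coboundary n Z \<rho> = (if \<rho> \<subseteq> {1..n} then (\<Sum>p\<in>\<rho>. simp_sign \<rho> p * Z (\<rho> - {p})) else 0)"

definition cocycle :: "nat \<Rightarrow> nat \<Rightarrow> (nat set \<Rightarrow> 'a::field) \<Rightarrow> bool" where
  "cocycle n d Z \<longleftrightarrow> cochain n d Z \<and> (\<forall>\<rho>. coboundary n Z \<rho> = 0)"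

definition Supp :: "(nat set \<Rightarrow> 'a::zero) \<Rightarrow> nat set set" where
  "Supp Z = {\<sigma>. Z \<sigma> \<noteq> 0}"

definition hypercut :: "nat \<Rightarrow> nat \<Rightarrow> (nat set \<Rightarrow> 'a::field) \<Rightarrow> bool" where
  "hypercut n d H \<longleftrightarrow> cocycle n d H \<and> H \<noteq> (\<lambda>_. 0) \<and>
     (\<forall>Z. cocycle n d Z \<and> Supp Z \<subseteq> Supp H \<longrightarrow> (\<exists>c. Z = (\<lambda>\<sigma>. c * H \<sigma>)))"

definition facet_adj :: "nat set \<Rightarrow> nat set \<Rightarrow> bool" where
  "facet_adj \<sigma> \<tau> \<longleftrightarrow> \<sigma> \<noteq> \<tau> \<and> (\<exists>f. f \<subseteq> \<sigma> \<and> f \<subseteq> \<tau> \<and> card f + 1 = card \<sigma> \<and> finite f)"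

definition graph_connected :: "'v set \<Rightarrow> ('v \<Rightarrow> 'v \<Rightarrow> bool) \<Rightarrow> bool" where
  "graph_connected V E \<longleftrightarrow> V \<noteq> {} \<and>
     (\<forall>u\<in>V. \<forall>v\<in>V. (u, v) \<in> {(x, y). x \<in> V \<and> y \<in> V \<and> E x y}\<^sup>*)"

definition k_connected :: "'v set \<Rightarrow> ('v \<Rightarrow> 'v \<Rightarrow> bool) \<Rightarrow> nat \<Rightarrow> bool" where
  "k_connected V E k \<longleftrightarrow> (\<forall>S. S \<subseteq> V \<and> card S < k \<longrightarrow> graph_connected (V - S) E)"

end

theory Submission
  imports Defs
begin

text \<open>Suppose that deleting a set \<open>S\<close> of fewer than \<open>n - d - 1\<close> simplices disconnects the facet
  graph, and let \<open>C\<close> be one component. Restricting \<open>H\<close> to \<open>C\<close> gives a cocycle of the complex \<open>K\<close>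
  of all subsets of \<open>[n]\<close> that contain no member of \<open>S\<close>, because a \<open>(d+1)\<close>-simplex of \<open>K\<close>
  has all its facets of \<open>Supp H - S\<close> in one component. Coning off the largest vertex shows
  that \<open>K\<close> has vanishing cohomology up to degree \<open>n - |S| - 2\<close>, so this restriction is the
  coboundary of some \<open>f\<close> on \<open>K\<close>. Then \<open>\<delta>f\<close>, taken on all \<open>d\<close>-simplices, is a genuine cocycle
  supported in \<open>Supp H\<close> which agrees with \<open>H\<close> on \<open>C\<close> and vanishes on the rest of \<open>Supp H - S\<close>,
  contradicting the minimality of the hypercut.\<close>

definition cob :: "(nat set \<Rightarrow> 'a::field) \<Rightarrow> nat set \<Rightarrow> 'a" where
  "cob Z \<rho> = (\<Sum>p\<in>\<rho>. simp_sign \<rho> p * Z (\<rho> - {p}))"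

lemma coboundary_eq_cob: "\<rho> \<subseteq> {1..n} \<Longrightarrow> coboundary n Z \<rho> = cob Z \<rho>"
  by (simp add: coboundary_def cob_def)

lemma simp_sign_nonzero: "simp_sign \<rho> p \<noteq> (0::'a::field)"
  by (simp add: simp_sign_def)

lemma simp_sign_Diff_less:
  assumes "finite \<rho>" "p \<in> \<rho>" "p < q"
  shows "simp_sign (\<rho> - {p}) q = - (simp_sign \<rho> q :: 'a::field)"
proof -
  have "{x \<in> \<rho>. x < q} = insert p {x \<in> \<rho> - {p}. x < q}" using assms by auto
  then have "card {x \<in> \<rho>. x < q} = Suc (card {x \<in> \<rho> - {p}. x < q})"
    using assms(1) by (simp add: card_insert_disjoint)
  then show ?thesis by (simp add: simp_sign_def)
qed

lemma simp_sign_Diff_greater: "p < q \<Longrightarrow> simp_sign (\<rho> - {q}) p = simp_sign \<rho> p"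
proof -
  assume "p < q"
  then have "{x \<in> \<rho> - {q}. x < p} = {x \<in> \<rho>. x < p}" by auto
  then show ?thesis by (simp add: simp_sign_def)
qed

lemma cob_cob: "cob (cob f) \<rho> = (0::'a::field)"
proof (cases "finite \<rho>")
  case False
  then show ?thesis by (simp add: cob_def)
next
  case fin: True
  define G :: "nat \<Rightarrow> nat \<Rightarrow> 'a"
    where "G p q = simp_sign \<rho> p * simp_sign (\<rho> - {p}) q * f (\<rho> - {p} - {q})" for p q
  define P where "P = {(p, q). p \<in> \<rho> \<and> q \<in> \<rho> \<and> p < q}"
  have finP: "finite P" "finite (prod.swap ` P)"
    using fin by (auto intro: finite_subset[of _ "\<rho> \<times> \<rho>"] simp: P_def)
  have antisym: "G q p = - G p q" if "(p, q) \<in> P" for p q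
  proof -
    from that have "p \<in> \<rho>" "p < q" by (auto simp: P_def)
    moreover have "\<rho> - {q} - {p} = \<rho> - {p} - {q}" by auto
    ultimately show ?thesis
      using simp_sign_Diff_less[OF fin, of p q, where 'a='a] simp_sign_Diff_greater[of p q \<rho>, where 'a='a]
      by (simp add: G_def)
  qed
  have "cob (cob f) \<rho> = (\<Sum>p\<in>\<rho>. \<Sum>q\<in>\<rho> - {p}. G p q)"
    by (simp add: cob_def G_def sum_distrib_left mult.assoc)
  also have "\<dots> = (\<Sum>(p, q)\<in>P \<union> prod.swap ` P. G p q)"
    using fin by (subst sum.Sigma) (auto intro!: sum.cong simp: P_def)
  also have "\<dots> = (\<Sum>(p, q)\<in>P. G p q) + (\<Sum>(p, q)\<in>P. G q p)"
    using finP by (subst sum.union_disjoint) (auto simp: P_def sum.reindex inj_on_def)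
  also have "\<dots> = 0"
    using antisym by (simp add: case_prod_unfold sum_negf flip: sum.distrib)
  finally show ?thesis .
qed

lemma cob_diff: "cob (\<lambda>\<tau>. a \<tau> - b \<tau>) \<rho> = cob a \<rho> - (cob b \<rho> :: 'a::field)"
  by (simp add: cob_def sum_subtractf right_diff_distrib)

lemma cob_scale: "cob (\<lambda>\<tau>. c * a \<tau>) \<rho> = c * (cob a \<rho> :: 'a::field)"
  by (simp add: cob_def sum_distrib_left algebra_simps)

lemma cob_zero: "cob (\<lambda>_. 0) \<rho> = (0::'a::field)"
  by (simp add: cob_def)

lemma cob_cong:
  "(\<And>p. p \<in> \<rho> \<Longrightarrow> a (\<rho> - {p}) = b (\<rho> - {p})) \<Longrightarrow> cob a \<rho> = (cob b \<rho> :: 'a::field)"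
  by (simp add: cob_def)

lemma cob_singleton: "cob Z {x} = (Z {} :: 'a::field)"
proof -
  have no_smaller: "{q. q = x \<and> q < x} = {}" by auto
  show ?thesis by (simp add: cob_def simp_sign_def no_smaller)
qed

lemma cob_insert_greatest:
  assumes "finite \<sigma>" "v \<notin> \<sigma>" "\<forall>p\<in>\<sigma>. p < v"
  shows "cob Z (insert v \<sigma>) = cob (\<lambda>\<tau>. Z (insert v \<tau>)) \<sigma> + (-1) ^ card \<sigma> * (Z \<sigma> :: 'a::field)"
proof -
  have "{q \<in> insert v \<sigma>. q < v} = \<sigma>" using assms by auto
  then have sign_v: "simp_sign (insert v \<sigma>) v = ((-1) ^ card \<sigma> :: 'a)"
    by (simp add: simp_sign_def)
  have "simp_sign (insert v \<sigma>) p * Z (insert v \<sigma> - {p}) = simp_sign \<sigma> p * Z (insert v (\<sigma> - {p}))"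
    if "p \<in> \<sigma>" for p
  proof -
    have "{q \<in> insert v \<sigma>. q < p} = {q \<in> \<sigma>. q < p}" "insert v \<sigma> - {p} = insert v (\<sigma> - {p})"
      using assms that by auto
    then show ?thesis by (simp add: simp_sign_def)
  qed
  moreover have "insert v \<sigma> - {v} = \<sigma>" using assms by auto
  ultimately show ?thesis
    using assms sign_v by (simp add: cob_def add.commute)
qed

definition avoids :: "nat set set \<Rightarrow> nat set \<Rightarrow> bool" where
  "avoids S \<sigma> \<longleftrightarrow> (\<forall>s\<in>S. \<not> s \<subseteq> \<sigma>)"

text \<open>The sets \<open>\<sigma> \<subseteq> U\<close> with \<open>avoids S \<sigma>\<close> form a simplicial complex; its faces are indexed
  by cardinality \<open>k\<close>, not by dimension.\<close>

definition agree_on_faces ::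
    "nat set \<Rightarrow> nat set set \<Rightarrow> nat \<Rightarrow> (nat set \<Rightarrow> 'a) \<Rightarrow> (nat set \<Rightarrow> 'a) \<Rightarrow> bool" where
  "agree_on_faces U S k f g \<longleftrightarrow> (\<forall>\<sigma>. \<sigma> \<subseteq> U \<longrightarrow> card \<sigma> = k \<longrightarrow> avoids S \<sigma> \<longrightarrow> f \<sigma> = g \<sigma>)"

lemma avoids_insert_iff:
  "v \<notin> \<tau> \<Longrightarrow> avoids S (insert v \<tau>) \<longleftrightarrow> avoids ((\<lambda>s. s - {v}) ` S) \<tau>"
  unfolding avoids_def by blast

lemma avoids_iff_avoids_not_containing:
  "v \<notin> \<sigma> \<Longrightarrow> avoids S \<sigma> \<longleftrightarrow> avoids {s \<in> S. v \<notin> s} \<sigma>"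
  unfolding avoids_def by blast

lemma avoids_subset: "S' \<subseteq> S \<Longrightarrow> avoids S \<sigma> \<Longrightarrow> avoids S' \<sigma>"
  unfolding avoids_def by blast

lemma avoids_same_card:
  assumes "finite \<sigma>" "\<forall>s\<in>S. card s = card \<sigma>" "\<sigma> \<notin> S"
  shows "avoids S \<sigma>"
  using assms by (metis avoids_def card_subset_eq)

lemma agree_on_faces_deletion:
  assumes "agree_on_faces U S k f g"
  shows "agree_on_faces (U - {v}) {s \<in> S. v \<notin> s} k f g"
  unfolding agree_on_faces_def
proof (intro allI impI)
  fix \<sigma> assume "\<sigma> \<subseteq> U - {v}" "card \<sigma> = k" "avoids {s \<in> S. v \<notin> s} \<sigma>"
  then show "f \<sigma> = g \<sigma>"
    using assms avoids_iff_avoids_not_containing[of v \<sigma> S] by (auto simp: agree_on_faces_def)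
qed

lemma avoiding_complex_acyclic_base:
  fixes Z :: "nat set \<Rightarrow> 'a::field"
  assumes "finite U" "S \<subseteq> Pow U" "card S < card U"
    and "agree_on_faces U S 1 (cob Z) (\<lambda>_. 0)"
  shows "agree_on_faces U S 0 (cob (\<lambda>_. 0)) Z"
  unfolding agree_on_faces_def
proof (intro allI impI)
  fix \<sigma> assume \<sigma>: "\<sigma> \<subseteq> U" "card \<sigma> = 0" "avoids S \<sigma>"
  then have empty: "\<sigma> = {}" using assms(1) finite_subset card_0_eq by metis
  obtain x where x: "x \<in> U" "{x} \<notin> S"
  proof (rule ccontr)
    assume "\<not> thesis"
    then have "(\<lambda>x. {x}) ` U \<subseteq> S" using that by blast
    then have "card ((\<lambda>x. {x}) ` U) \<le> card S"
      using assms(1,2) by (intro card_mono) (auto intro: finite_subset)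
    then show False using assms(3) by (simp add: card_image)
  qed
  have "avoids S {x}"
    using x \<sigma>(3) empty by (auto simp: avoids_def subset_singleton_iff)
  moreover have "{x} \<subseteq> U" "card {x} = 1" using x by auto
  ultimately have "cob Z {x} = 0"
    using assms(4) unfolding agree_on_faces_def by blast
  then have "Z {} = 0" by (simp add: cob_singleton)
  then show "cob (\<lambda>_. 0) \<sigma> = Z \<sigma>" by (simp add: empty cob_zero)
qed

lemma agree_on_faces_cone:
  fixes Z x :: "nat set \<Rightarrow> 'a::field"
  assumes U: "finite U" "v \<in> U" "\<forall>p\<in>U - {v}. p < v"
    and deletion: "agree_on_faces (U - {v}) {s \<in> S. v \<notin> s} (Suc k) (cob x) (\<lambda>\<sigma>. (-1) ^ k * Z \<sigma>)"
    and link: "agree_on_faces (U - {v}) ((\<lambda>s. s - {v}) ` S) k x (\<lambda>\<tau>. Z (insert v \<tau>))"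
  shows "agree_on_faces U S (Suc k) (cob (\<lambda>\<tau>. if v \<in> \<tau> then 0 else (-1) ^ k * x \<tau>)) Z"
  unfolding agree_on_faces_def
proof (intro allI impI)
  define f where "f \<tau> = (if v \<in> \<tau> then 0 else (-1) ^ k * x \<tau>)" for \<tau>
  fix \<sigma> assume \<sigma>: "\<sigma> \<subseteq> U" "card \<sigma> = Suc k" "avoids S \<sigma>"
  have sign_sq: "(-1) ^ k * ((-1) ^ k * a) = (a :: 'a)" for a
    by (simp flip: mult.assoc power_add)
  show "cob f \<sigma> = Z \<sigma>"
  proof (cases "v \<in> \<sigma>")
    case True
    define \<tau> where "\<tau> = \<sigma> - {v}"
    have \<tau>: "\<tau> \<subseteq> U - {v}" "\<sigma> = insert v \<tau>" "v \<notin> \<tau>" "finite \<tau>"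
      using \<sigma>(1) True U(1) by (auto simp: \<tau>_def intro: finite_subset)
    then have "card \<tau> = k" using \<sigma>(2) by simp
    moreover have "avoids ((\<lambda>s. s - {v}) ` S) \<tau>" using \<sigma>(3) \<tau>(2) avoids_insert_iff[OF \<tau>(3)] by simp
    ultimately have "x \<tau> = Z \<sigma>" using link \<tau> by (simp add: agree_on_faces_def)
    moreover have "cob f \<sigma> = cob (\<lambda>_. 0) \<tau> + (-1) ^ card \<tau> * f \<tau>"
      using \<tau> U(3) cob_insert_greatest[of \<tau> v f] by (auto simp: f_def)
    ultimately show ?thesis using \<tau> \<open>card \<tau> = k\<close> by (simp add: cob_zero f_def sign_sq)
  next
    case False
    then have "\<sigma> \<subseteq> U - {v}" "avoids {s \<in> S. v \<notin> s} \<sigma>"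
      using \<sigma> avoids_iff_avoids_not_containing[OF False] by auto
    then have "cob x \<sigma> = (-1) ^ k * Z \<sigma>" using deletion \<sigma>(2) by (simp add: agree_on_faces_def)
    moreover have "cob f \<sigma> = cob (\<lambda>\<tau>. (-1) ^ k * x \<tau>) \<sigma>"
      using False by (intro cob_cong) (simp add: f_def)
    ultimately show ?thesis by (simp add: cob_scale sign_sq)
  qed
qed

lemma agree_on_faces_link:
  fixes Z :: "nat set \<Rightarrow> 'a::field"
  assumes U: "finite U" "v \<in> U" "\<forall>p\<in>U - {v}. p < v"
    and cocycle: "agree_on_faces U S (Suc (Suc k)) (cob Z) (\<lambda>_. 0)"
  shows "agree_on_faces (U - {v}) ((\<lambda>s. s - {v}) ` S) (Suc k)
           (cob (\<lambda>\<tau>. Z (insert v \<tau>))) (\<lambda>\<sigma>. (-1) ^ k * Z \<sigma>)"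
  unfolding agree_on_faces_def
proof (intro allI impI)
  fix \<sigma> assume \<sigma>: "\<sigma> \<subseteq> U - {v}" "card \<sigma> = Suc k" "avoids ((\<lambda>s. s - {v}) ` S) \<sigma>"
  have "v \<notin> \<sigma>" "finite \<sigma>" using \<sigma>(1) U(1) finite_subset by auto
  then have "insert v \<sigma> \<subseteq> U" "card (insert v \<sigma>) = Suc (Suc k)" "avoids S (insert v \<sigma>)"
    using \<sigma> U(2) avoids_insert_iff by auto
  then have "cob Z (insert v \<sigma>) = 0" using cocycle by (simp add: agree_on_faces_def)
  moreover have "cob Z (insert v \<sigma>) = cob (\<lambda>\<tau>. Z (insert v \<tau>)) \<sigma> + (-1) ^ Suc k * Z \<sigma>"
    using cob_insert_greatest[of \<sigma> v Z] \<open>v \<notin> \<sigma>\<close> \<open>finite \<sigma>\<close> \<sigma>(1,2) U(3) by auto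
  ultimately show "cob (\<lambda>\<tau>. Z (insert v \<tau>)) \<sigma> = (-1) ^ k * Z \<sigma>"
    by (simp add: add_eq_0_iff)
qed

lemma avoiding_complex_acyclic_step:
  fixes Z :: "nat set \<Rightarrow> 'a::field"
  assumes U: "finite U" "v \<in> U" "\<forall>p\<in>U - {v}. p < v"
    and S: "S \<subseteq> Pow U" "card S + Suc k + 1 \<le> card U"
    and cocycle: "agree_on_faces U S (Suc (Suc k)) (cob Z) (\<lambda>_. 0)"
    and IH: "\<And>S' j (Z' :: nat set \<Rightarrow> 'a). S' \<subseteq> Pow (U - {v}) \<Longrightarrow> card S' + j + 1 \<le> card (U - {v})
      \<Longrightarrow> agree_on_faces (U - {v}) S' (Suc j) (cob Z') (\<lambda>_. 0)
      \<Longrightarrow> \<exists>f. agree_on_faces (U - {v}) S' j (cob f) Z'"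
  shows "\<exists>f. agree_on_faces U S (Suc k) (cob f) Z"
proof -
  define U' Sn T where "U' = U - {v}" and "Sn = {s \<in> S. v \<notin> s}" and "T = (\<lambda>s. s - {v}) ` S"
  define Zl c where "Zl = (\<lambda>\<tau>. Z (insert v \<tau>))" and "c = (\<lambda>\<sigma>. (-1) ^ k * Z \<sigma>)"
  have finS: "finite S" using S(1) U(1) by (meson finite_Pow_iff finite_subset)
  have card_U': "card U' = card U - 1" using U by (simp add: U'_def)
  have Sn_T: "Sn \<subseteq> Pow U'" "T \<subseteq> Pow U'" "Sn \<subseteq> T"
    using S(1) by (auto simp: Sn_def T_def U'_def image_iff)
  have card_T: "card T + k + 1 \<le> card U'"
    using card_image_le[OF finS, of "\<lambda>s. s - {v}"] S(2) card_U' by (simp add: T_def)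
  have link: "agree_on_faces U' T (Suc k) (cob Zl) c"
    using agree_on_faces_link[OF U cocycle] by (simp add: U'_def T_def Zl_def c_def)
  obtain x1 where x1: "agree_on_faces U' Sn (Suc k) (cob x1) c"
  proof (cases "Sn = S")
    case True
    then have "s - {v} = s" if "s \<in> S" for s using that by (auto simp: Sn_def)
    then have "T = Sn" unfolding T_def using True by simp
    then show thesis using that link by blast
  next
    case False
    moreover have "Sn \<subseteq> S" by (simp add: Sn_def)
    ultimately have "card Sn < card S" using finS psubset_card_mono by blast
    then have "card Sn + Suc k + 1 \<le> card U'" using S(2) card_U' by linarith
    moreover have "agree_on_faces U' Sn (Suc (Suc k)) (cob c) (\<lambda>_. 0)"
      using agree_on_faces_deletion[OF cocycle, of v]
      by (simp add: agree_on_faces_def c_def cob_scale U'_def Sn_def)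
    ultimately show thesis using IH[of Sn "Suc k" c, folded U'_def, OF Sn_T(1)] that by blast
  qed
  \<comment> \<open>\<open>x1 - Zl\<close> is a cocycle on the link; subtracting its primitive \<open>q\<close> from \<open>x1\<close> makes \<open>x1\<close>
    agree with \<open>Zl\<close> there without changing \<open>cob x1\<close>\<close>
  have "agree_on_faces U' T (Suc k) (cob (\<lambda>\<tau>. x1 \<tau> - Zl \<tau>)) (\<lambda>_. 0)"
    using x1 link avoids_subset[OF Sn_T(3)] by (simp add: agree_on_faces_def cob_diff)
  then obtain q where q: "agree_on_faces U' T k (cob q) (\<lambda>\<tau>. x1 \<tau> - Zl \<tau>)"
    using IH[of T k "\<lambda>\<tau>. x1 \<tau> - Zl \<tau>", folded U'_def, OF Sn_T(2) card_T] by blast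
  have "agree_on_faces U' Sn (Suc k) (cob (\<lambda>\<tau>. x1 \<tau> - cob q \<tau>)) c"
    using x1 by (simp add: agree_on_faces_def cob_diff cob_cob)
  moreover have "agree_on_faces U' T k (\<lambda>\<tau>. x1 \<tau> - cob q \<tau>) Zl"
    using q by (simp add: agree_on_faces_def)
  ultimately have "agree_on_faces U S (Suc k)
      (cob (\<lambda>\<tau>. if v \<in> \<tau> then 0 else (-1) ^ k * (x1 \<tau> - cob q \<tau>))) Z"
    by (intro agree_on_faces_cone[OF U]) (simp_all add: U'_def Sn_def T_def Zl_def c_def)
  then show ?thesis by blast
qed

lemma avoiding_complex_acyclic:
  fixes Z :: "nat set \<Rightarrow> 'a::field"
  assumes "finite U" "S \<subseteq> Pow U" "card S + k + 1 \<le> card U"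
    and "agree_on_faces U S (Suc k) (cob Z) (\<lambda>_. 0)"
  shows "\<exists>f. agree_on_faces U S k (cob f) Z"
  using assms
proof (induction "card U" arbitrary: U S k Z rule: less_induct)
  case less
  show ?case
  proof (cases k)
    case 0
    have "agree_on_faces U S 0 (cob (\<lambda>_. 0)) Z"
      using less.prems 0 by (intro avoiding_complex_acyclic_base) simp_all
    then show ?thesis using 0 by blast
  next
    case (Suc j)
    define v where "v = Max U"
    have "U \<noteq> {}" using less.prems(3) by auto
    then have v: "v \<in> U" "\<forall>p\<in>U - {v}. p < v"
      using less.prems(1) by (auto simp: v_def intro: Max_in le_neq_implies_less)
    have "card (U - {v}) < card U" using v(1) less.prems(1) by (meson card_Diff1_less)
    then have "\<exists>f. agree_on_faces (U - {v}) S' j' (cob f) Z'"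
      if "S' \<subseteq> Pow (U - {v})" "card S' + j' + 1 \<le> card (U - {v})"
        "agree_on_faces (U - {v}) S' (Suc j') (cob Z') (\<lambda>_. 0)"
      for S' j' and Z' :: "nat set \<Rightarrow> 'a"
      using less.hyps that less.prems(1) by blast
    then show ?thesis
      using avoiding_complex_acyclic_step[OF less.prems(1) v less.prems(2)] less.prems(3,4)
      unfolding Suc by blast
  qed
qed

lemma simplex_finite: "simplex n d \<sigma> \<Longrightarrow> finite \<sigma>"
  unfolding simplex_def using finite_subset by blast

lemma simplex_Supp_cochain: "cochain n d Z \<Longrightarrow> \<sigma> \<in> Supp Z \<Longrightarrow> simplex n d \<sigma>"
  by (simp add: cochain_def Supp_def)

lemma finite_Supp_cochain:
  assumes "cochain n d Z"
  shows "finite (Supp Z)"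
proof (rule finite_subset)
  show "Supp Z \<subseteq> Pow {1..n}"
    using simplex_Supp_cochain[OF assms] by (auto simp: simplex_def)
qed simp

lemma cocycle_Supp_coface:
  assumes "cocycle n d Z" "\<sigma> \<in> Supp Z" "p \<in> {1..n} - \<sigma>"
  shows "\<exists>q\<in>\<sigma>. insert p \<sigma> - {q} \<in> Supp Z"
proof (rule ccontr)
  assume "\<not> ?thesis"
  then have vanish: "Z (insert p \<sigma> - {q}) = 0" if "q \<in> \<sigma>" for q
    using that by (auto simp: Supp_def)
  have "simplex n d \<sigma>" using assms(1,2) simplex_Supp_cochain by (auto simp: cocycle_def)
  then have \<sigma>: "simplex n d \<sigma>" "finite \<sigma>" using simplex_finite by auto
  then have "insert p \<sigma> \<subseteq> {1..n}" using assms(3) by (auto simp: simplex_def)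
  then have "0 = cob Z (insert p \<sigma>)"
    using assms(1) coboundary_eq_cob by (metis cocycle_def)
  also have "\<dots> = simp_sign (insert p \<sigma>) p * Z \<sigma>"
    using \<sigma>(2) assms(3) vanish by (simp add: cob_def)
  finally show False
    using assms(2) simp_sign_nonzero by (auto simp: Supp_def)
qed

lemma card_Supp_cocycle:
  assumes Z: "cocycle n d Z" "Z \<noteq> (\<lambda>_. 0)"
  shows "n - d \<le> card (Supp Z)"
proof -
  obtain \<sigma> where \<sigma>: "\<sigma> \<in> Supp Z" using Z(2) by (auto simp: Supp_def)
  have "simplex n d \<sigma>" "finite (Supp Z)"
    using Z(1) \<sigma> simplex_Supp_cochain finite_Supp_cochain by (auto simp: cocycle_def)
  define g where "g p = (SOME \<tau>. \<tau> \<in> Supp Z \<and> p \<in> \<tau> \<and> \<tau> \<subseteq> insert p \<sigma>)" for p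
  have g: "g p \<in> Supp Z \<and> p \<in> g p \<and> g p \<subseteq> insert p \<sigma>" if p: "p \<in> {1..n} - \<sigma>" for p
  proof -
    obtain q where "q \<in> \<sigma>" "insert p \<sigma> - {q} \<in> Supp Z"
      using cocycle_Supp_coface[OF Z(1) \<sigma> p] by blast
    then have "\<exists>\<tau>. \<tau> \<in> Supp Z \<and> p \<in> \<tau> \<and> \<tau> \<subseteq> insert p \<sigma>"
      using p by (intro exI[of _ "insert p \<sigma> - {q}"]) auto
    then show ?thesis unfolding g_def by (rule someI_ex)
  qed
  have "inj_on g ({1..n} - \<sigma>)"
  proof (rule inj_onI)
    fix p p' assume p: "p \<in> {1..n} - \<sigma>" "p' \<in> {1..n} - \<sigma>" "g p = g p'"
    then have "p' \<in> insert p \<sigma>" using g[OF p(1)] g[OF p(2)] by auto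
    then show "p = p'" using p(2) by auto
  qed
  moreover have "g ` ({1..n} - \<sigma>) \<subseteq> Supp Z - {\<sigma>}"
  proof (rule image_subsetI)
    fix p assume "p \<in> {1..n} - \<sigma>"
    then show "g p \<in> Supp Z - {\<sigma>}" using g[of p] by auto
  qed
  ultimately have "card ({1..n} - \<sigma>) \<le> card (Supp Z - {\<sigma>})"
    using \<open>finite (Supp Z)\<close> by (simp add: card_inj_on_le)
  moreover have "card ({1..n} - \<sigma>) = n - (d + 1)"
    using \<open>simplex n d \<sigma>\<close> simplex_finite[of n d \<sigma>] by (simp add: simplex_def card_Diff_subset)
  moreover have "card (Supp Z - {\<sigma>}) = card (Supp Z) - 1" "card (Supp Z) > 0"
    using \<sigma> \<open>finite (Supp Z)\<close> card_gt_0_iff by auto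
  ultimately show ?thesis by linarith
qed

lemma cocycle_cob_on_simplices: "cocycle n d (\<lambda>\<sigma>. if simplex n d \<sigma> then cob f \<sigma> else (0::'a::field))"
  unfolding cocycle_def
proof (intro conjI allI)
  define Z where "Z = (\<lambda>\<sigma>. if simplex n d \<sigma> then cob f \<sigma> else (0::'a))"
  show "cochain n d Z" by (simp add: cochain_def Z_def)
  fix \<rho>
  show "coboundary n Z \<rho> = 0"
  proof (cases "\<rho> \<subseteq> {1..n}")
    case False
    then show ?thesis by (simp add: coboundary_def)
  next
    case True
    then have "finite \<rho>" using finite_subset by blast
    have "cob Z \<rho> = 0"
    proof (cases "card \<rho> = d + 2")
      case True
      then have "cob Z \<rho> = cob (cob f) \<rho>"
        using \<open>finite \<rho>\<close> \<open>\<rho> \<subseteq> {1..n}\<close> by (intro cob_cong) (auto simp: Z_def simplex_def)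
      then show ?thesis by (simp add: cob_cob)
    next
      case False
      then have "cob Z \<rho> = cob (\<lambda>_. 0) \<rho>"
        using \<open>finite \<rho>\<close> by (intro cob_cong) (auto simp: Z_def simplex_def card_Diff_singleton)
      then show ?thesis by (simp add: cob_zero)
    qed
    then show ?thesis using True coboundary_eq_cob by metis
  qed
qed

lemma facet_adj_Diff:
  assumes "finite \<rho>" "p \<in> \<rho>" "q \<in> \<rho>" "p \<noteq> q"
  shows "facet_adj (\<rho> - {p}) (\<rho> - {q})"
  unfolding facet_adj_def
proof (intro conjI exI[of _ "\<rho> - {p} - {q}"])
  show "\<rho> - {p} \<noteq> \<rho> - {q}" using assms by auto
  have "card {p, q} \<le> card \<rho>" using assms by (intro card_mono) auto
  then show "card (\<rho> - {p} - {q}) + 1 = card (\<rho> - {p})"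
    using assms by (simp add: card_Diff_singleton)
qed (use assms in auto)

text \<open>A \<open>(d+1)\<close>-simplex avoiding \<open>S\<close> has all its facets in \<open>Supp H\<close> outside \<open>S\<close>, and these are
  pairwise adjacent; so either all or none of them lie in a closed part \<open>C\<close>.\<close>

lemma cocycle_restrict_closed:
  fixes H :: "nat set \<Rightarrow> 'a::field"
  assumes H: "cocycle n d H"
    and closed: "\<And>x y. x \<in> C \<Longrightarrow> y \<in> Supp H - S \<Longrightarrow> facet_adj x y \<Longrightarrow> y \<in> C"
  shows "agree_on_faces {1..n} S (Suc (Suc d)) (cob (\<lambda>\<sigma>. if \<sigma> \<in> C then H \<sigma> else 0)) (\<lambda>_. 0)"
  unfolding agree_on_faces_def
proof (intro allI impI)
  define Z0 where "Z0 = (\<lambda>\<sigma>. if \<sigma> \<in> C then H \<sigma> else 0)"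
  fix \<rho> assume \<rho>: "\<rho> \<subseteq> {1..n}" "card \<rho> = Suc (Suc d)" "avoids S \<rho>"
  have "finite \<rho>" using \<rho>(1) finite_subset by blast
  show "cob Z0 \<rho> = 0"
  proof (cases "\<exists>p\<in>\<rho>. \<rho> - {p} \<in> C")
    case True
    then obtain p where p: "p \<in> \<rho>" "\<rho> - {p} \<in> C" by blast
    have "Z0 (\<rho> - {q}) = H (\<rho> - {q})" if "q \<in> \<rho>" for q
    proof (cases "H (\<rho> - {q}) = 0 \<or> q = p")
      case False
      then have "\<rho> - {q} \<in> Supp H - S" using \<rho>(3) by (auto simp: Supp_def avoids_def)
      then show ?thesis
        using closed[OF p(2)] facet_adj_Diff[OF \<open>finite \<rho>\<close> p(1) that] False by (simp add: Z0_def)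
    qed (use p in \<open>auto simp: Z0_def\<close>)
    then have "cob Z0 \<rho> = cob H \<rho>" by (rule cob_cong)
    then show ?thesis using H \<rho>(1) coboundary_eq_cob by (metis cocycle_def)
  next
    case False
    then have "cob Z0 \<rho> = cob (\<lambda>_. 0) \<rho>" by (intro cob_cong) (auto simp: Z0_def)
    then show ?thesis by (simp add: cob_zero)
  qed
qed

lemma hypercut_closed_part:
  fixes H :: "nat set \<Rightarrow> 'a::field"
  assumes H: "hypercut n d H"
    and S: "S \<subseteq> Supp H" "card S + d + 2 \<le> n"
    and C: "u \<in> C" "C \<subseteq> Supp H - S"
    and closed: "\<And>x y. x \<in> C \<Longrightarrow> y \<in> Supp H - S \<Longrightarrow> facet_adj x y \<Longrightarrow> y \<in> C"
  shows "Supp H - S \<subseteq> C"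
proof
  define Z0 where "Z0 = (\<lambda>\<sigma>. if \<sigma> \<in> C then H \<sigma> else 0)"
  have cocycle: "cocycle n d H" using H by (simp add: hypercut_def)
  then have simplices: "simplex n d \<sigma>" if "\<sigma> \<in> Supp H" for \<sigma>
    using that simplex_Supp_cochain by (auto simp: cocycle_def)
  then have "S \<subseteq> Pow {1..n}" using S(1) by (auto simp: simplex_def)
  moreover have "agree_on_faces {1..n} S (Suc (Suc d)) (cob Z0) (\<lambda>_. 0)"
    unfolding Z0_def by (rule cocycle_restrict_closed[OF cocycle closed])
  moreover have "card S + Suc d + 1 \<le> card {1..n}" using S(2) by simp
  ultimately obtain f where f: "agree_on_faces {1..n} S (Suc d) (cob f) Z0"
    using avoiding_complex_acyclic[of "{1..n}" S "Suc d" Z0] by blast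
  define Z where "Z = (\<lambda>\<sigma>. if simplex n d \<sigma> then cob f \<sigma> else 0)"
  have Z_eq: "Z \<sigma> = Z0 \<sigma>" if "simplex n d \<sigma>" "\<sigma> \<notin> S" for \<sigma>
  proof -
    have "\<forall>s\<in>S. card s = card \<sigma>" using that(1) S(1) simplices by (auto simp: simplex_def)
    then have "avoids S \<sigma>" using that simplex_finite by (intro avoids_same_card) auto
    then show ?thesis using f that by (simp add: agree_on_faces_def Z_def simplex_def)
  qed
  have "Supp Z \<subseteq> Supp H"
  proof
    fix x assume x: "x \<in> Supp Z"
    then have "simplex n d x" by (auto simp: Supp_def Z_def split: if_splits)
    then show "x \<in> Supp H"
      using x S(1) Z_eq[of x] by (cases "x \<in> S") (auto simp: Supp_def Z0_def split: if_splits)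
  qed
  moreover have "cocycle n d Z" unfolding Z_def by (rule cocycle_cob_on_simplices)
  ultimately obtain c where c: "Z = (\<lambda>\<sigma>. c * H \<sigma>)"
    using H unfolding hypercut_def by blast
  have "u \<in> Supp H - S" using C by blast
  then have "c * H u = H u" "H u \<noteq> 0"
    using c Z_eq[of u] simplices C(1) by (auto simp: Z0_def Supp_def)
  then have "c = 1" by simp
  fix w assume w: "w \<in> Supp H - S"
  then have "Z0 w \<noteq> 0" using c \<open>c = 1\<close> Z_eq[of w] simplices by (auto simp: Supp_def)
  then show "w \<in> C" by (auto simp: Z0_def split: if_splits)
qed

lemma graph_connectedI_closed:
  assumes "V \<noteq> {}"
    and "\<And>u C. u \<in> C \<Longrightarrow> C \<subseteq> V \<Longrightarrow> (\<And>x y. x \<in> C \<Longrightarrow> y \<in> V \<Longrightarrow> E x y \<Longrightarrow> y \<in> C) \<Longrightarrow> V \<subseteq> C"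
  shows "graph_connected V E"
  unfolding graph_connected_def
proof (intro conjI ballI)
  define R where "R = {(x, y). x \<in> V \<and> y \<in> V \<and> E x y}"
  fix u w assume u: "u \<in> V" and w: "w \<in> V"
  define C where "C = {x. (u, x) \<in> R\<^sup>*}"
  have "C \<subseteq> V"
  proof
    fix x assume "x \<in> C"
    then have "(u, x) \<in> R\<^sup>*" by (simp add: C_def)
    then show "x \<in> V" using u by (induction rule: rtrancl_induct) (auto simp: R_def)
  qed
  moreover have "y \<in> C" if "x \<in> C" "y \<in> V" "E x y" for x y
  proof -
    have "(x, y) \<in> R" using that \<open>C \<subseteq> V\<close> by (auto simp: R_def)
    then show ?thesis using that(1) by (simp add: C_def rtrancl_into_rtrancl)
  qed
  moreover have "u \<in> C" by (simp add: C_def)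
  ultimately have "V \<subseteq> C" by (rule assms(2)[rotated])
  then show "(u, w) \<in> R\<^sup>*" using w by (auto simp: C_def)
qed (use assms(1) in simp)

theorem theorem4p7:
  fixes H :: "nat set \<Rightarrow> 'a::field" and n d :: nat
  assumes "1 \<le> d" and "d + 2 \<le> n"
    and "hypercut n d H"
  shows "k_connected (Supp H) facet_adj (n - d - 1)"
  unfolding k_connected_def
proof (intro allI impI, elim conjE)
  fix S assume S: "S \<subseteq> Supp H" "card S < n - d - 1"
  have H: "cocycle n d H" "H \<noteq> (\<lambda>_. 0)" using assms(3) by (auto simp: hypercut_def)
  then have "finite (Supp H)" using finite_Supp_cochain[of n d H] by (simp add: cocycle_def)
  moreover have "card S < card (Supp H)" using card_Supp_cocycle[OF H] S(2) by linarith
  ultimately have "Supp H - S \<noteq> {}" using S(1) card_mono by fastforce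
  moreover have "Supp H - S \<subseteq> C"
    if "u \<in> C" "C \<subseteq> Supp H - S" "\<And>x y. x \<in> C \<Longrightarrow> y \<in> Supp H - S \<Longrightarrow> facet_adj x y \<Longrightarrow> y \<in> C"
    for u C
    using hypercut_closed_part[OF assms(3) S(1)] S(2) that by simp
  ultimately show "graph_connected (Supp H - S) facet_adj" by (rule graph_connectedI_closed)
qed

end
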